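(* Let $x\in\mathbb{R}$ and let $\theta\colon[x,+\infty)\to\mathbb{R}$ be a continuous sublinear function. If $y$ is a real number with $y<\theta(t)$ for every $t\in[x,+\infty)$, then the set $$E(x,y,\theta)=\left\{t>x\ \middle|\ \forall s\in[x,t],\ \theta(s)\ge\frac{\theta(t)-y}{t-x}(s-x)+y\right\}$$ is not bounded above.
   Context: A function $\theta$ is sublinear if $\theta(t)=o(t)$ as $t\to+\infty$. *)

theory Defs
  imports "HOL-Analysis.Analysis" "HOL-Library.Landau_Symbols"
begin

definition sublinear :: "(real \<Rightarrow> real) \<Rightarrow> bool" where
  "sublinear \<theta> \<longleftrightarrow> \<theta> \<in> o[at_top](\<lambda>t. t)"

definition E_set :: "real \<Rightarrow> real \<Rightarrow> (real \<Rightarrow> real) \<Rightarrow> real set" where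
  "E_set x y \<theta> = {t. t > x \<and> (\<forall>s\<in>{x..t}. \<theta> s \<ge> (\<theta> t - y) / (t - x) * (s - x) + y)}"

end

theory Submission
  imports Defs "HOL-Real_Asymp.Real_Asymp"
begin

text \<open>
  A point \<open>t > x\<close> lies in \<open>E_set x y \<theta>\<close> as soon as it minimises the slope of the chord from
  \<open>(x, y)\<close> to the graph of \<open>\<theta>\<close> over \<open>(x, t]\<close>. On any \<open>(x, M]\<close> these slopes are bounded below
  by some \<open>c > 0\<close>, because \<open>\<theta> - y\<close> is continuous and positive on \<open>[x, M]\<close>; by sublinearity
  they tend to \<open>0\<close>, so some \<open>T > M\<close> has slope below \<open>c\<close>. A point \<open>t\<close> minimising the slope
  over \<open>[M, T]\<close> then minimises it over all of \<open>(x, t]\<close>, so it is an element of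
  \<open>E_set x y \<theta>\<close> beyond \<open>M\<close>.
\<close>

definition chord_slope :: "real \<Rightarrow> real \<Rightarrow> (real \<Rightarrow> real) \<Rightarrow> real \<Rightarrow> real" where
  "chord_slope x y \<theta> t = (\<theta> t - y) / (t - x)"

lemma E_setI_chord_slope_min:
  assumes "x < t" and "y \<le> \<theta> x"
    and min: "\<forall>s\<in>{x<..t}. chord_slope x y \<theta> t \<le> chord_slope x y \<theta> s"
  shows "t \<in> E_set x y \<theta>"
  unfolding E_set_def
proof (intro CollectI conjI ballI)
  show "x < t" by fact
  fix s assume s: "s \<in> {x..t}"
  show "(\<theta> t - y) / (t - x) * (s - x) + y \<le> \<theta> s"
  proof (cases "s = x")
    case True
    then show ?thesis using \<open>y \<le> \<theta> x\<close> by simp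
  next
    case False
    with s have "x < s" by simp
    with s min have "(\<theta> t - y) / (t - x) \<le> (\<theta> s - y) / (s - x)"
      by (auto simp: chord_slope_def)
    with \<open>x < s\<close> show ?thesis by (simp add: le_divide_eq)
  qed
qed

lemma chord_slope_tendsto_zero:
  assumes "sublinear \<theta>"
  shows "(chord_slope x y \<theta> \<longlongrightarrow> 0) at_top"
proof -
  have "(\<lambda>t. \<theta> t - y) \<in> o(\<lambda>t. t)"
  proof (rule sum_in_smallo)
    show "\<theta> \<in> o(\<lambda>t. t)" using assms unfolding sublinear_def .
  qed real_asymp
  also have "(\<lambda>t. t) \<in> O(\<lambda>t. t - x)" by real_asymp
  finally show ?thesis unfolding chord_slope_def[abs_def] by (rule smalloD_tendsto)
qed

lemma chord_slope_pos_lower_bound: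
  assumes cont: "continuous_on {x..M} \<theta>" and above: "\<forall>s\<in>{x..M}. y < \<theta> s" and "x < M"
  obtains c where "0 < c" and "\<forall>s\<in>{x<..M}. c \<le> chord_slope x y \<theta> s"
proof -
  obtain s0 where s0: "s0 \<in> {x..M}" and min: "\<forall>s\<in>{x..M}. \<theta> s0 \<le> \<theta> s"
    using continuous_attains_inf[OF compact_Icc _ cont] \<open>x < M\<close> by auto
  define m where "m = \<theta> s0 - y"
  have "0 < m" using above s0 by (simp add: m_def)
  have "m / (M - x) \<le> chord_slope x y \<theta> s" if s: "s \<in> {x<..M}" for s
  proof -
    have "m / (M - x) \<le> m / (s - x)"
      using s \<open>0 < m\<close> by (intro divide_left_mono) auto
    also have "\<dots> \<le> (\<theta> s - y) / (s - x)"
      using s min by (intro divide_right_mono) (auto simp: m_def)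
    finally show ?thesis by (simp add: chord_slope_def)
  qed
  moreover have "0 < m / (M - x)" using \<open>0 < m\<close> \<open>x < M\<close> by simp
  ultimately show thesis using that by blast
qed

lemma E_set_elem_beyond:
  assumes cont: "continuous_on {x..} \<theta>" and "sublinear \<theta>"
    and above: "\<forall>t\<in>{x..}. y < \<theta> t" and "x < M"
  shows "\<exists>t\<in>E_set x y \<theta>. M \<le> t"
proof -
  let ?g = "chord_slope x y \<theta>"
  have "continuous_on {x..M} \<theta>" using cont by (rule continuous_on_subset) auto
  then obtain c where "0 < c" and c_le: "\<forall>s\<in>{x<..M}. c \<le> ?g s"
    by (rule chord_slope_pos_lower_bound) (use above \<open>x < M\<close> in auto)
  have "eventually (\<lambda>t. ?g t < c) at_top"
    using order_tendstoD(2)[OF chord_slope_tendsto_zero[OF \<open>sublinear \<theta>\<close>] \<open>0 < c\<close>] .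
  then obtain N where N: "\<And>t. N \<le> t \<Longrightarrow> ?g t < c"
    by (auto simp: eventually_at_top_linorder)
  define T where "T = max N (M + 1)"
  have "M < T" and "?g T < c" using N by (auto simp: T_def)
  have cont_g: "continuous_on {M..T} ?g"
    unfolding chord_slope_def using \<open>x < M\<close>
    by (intro continuous_intros continuous_on_subset[OF cont]) auto
  obtain t where t: "t \<in> {M..T}" and min: "\<forall>s\<in>{M..T}. ?g t \<le> ?g s"
    using continuous_attains_inf[OF compact_Icc _ cont_g] \<open>M < T\<close> by auto
  have "?g t \<le> ?g T" using min \<open>M < T\<close> by simp
  with \<open>?g T < c\<close> have "?g t < c" by simp
  have "t \<in> E_set x y \<theta>"
  proof (rule E_setI_chord_slope_min)
    show "x < t" using t \<open>x < M\<close> by simp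
    show "y \<le> \<theta> x" using above by (simp add: less_imp_le)
    show "\<forall>s\<in>{x<..t}. ?g t \<le> ?g s"
    proof
      fix s assume s: "s \<in> {x<..t}"
      show "?g t \<le> ?g s"
      proof (cases "s \<le> M")
        case True
        with s c_le have "c \<le> ?g s" by simp
        with \<open>?g t < c\<close> show ?thesis by simp
      next
        case False
        with s t min show ?thesis by simp
      qed
    qed
  qed
  with t show ?thesis by auto
qed

theorem lemma3p1:
  fixes x y :: real and \<theta> :: "real \<Rightarrow> real"
  assumes "continuous_on {x..} \<theta>"
    and "sublinear \<theta>"
    and "\<forall>t\<in>{x..}. y < \<theta> t"
  shows "\<not> bdd_above (E_set x y \<theta>)"
proof
  assume "bdd_above (E_set x y \<theta>)"
  then obtain B where B: "\<And>t. t \<in> E_set x y \<theta> \<Longrightarrow> t \<le> B"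
    by (auto simp: bdd_above_def)
  have "x < max B x + 1" by simp
  then obtain t where "t \<in> E_set x y \<theta>" and "max B x + 1 \<le> t"
    using E_set_elem_beyond[OF assms] by blast
  with B show False by force
qed

end
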